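(* Let $\mathcal{H}=W_{r_1}\otimes\dots\otimes W_{r_N}$ with $\dim W_{r_i}=r_i+1$, and let $\xi_1,\dots,\xi_N\in\mathbb{C}$. Assume the family of $R$-matrices described in the context satisfies the Yang–Baxter equation and the initial condition $R^{W_rW_r}(0)=P^{W_rW_r}$. Fix a site $n\in\{1,\dots,N\}$ and assume that the transfer matrices $t^{(r_i)}(\xi_i)$, $1\le i\le n$, are invertible operators on $\mathcal{H}$. Then for every operator $E^\alpha\in\operatorname{End}(W_{r_n})$, denoting by $E^\alpha_n$ its action on the $n$-th tensor factor of $\mathcal{H}$ and by $E^\alpha_0$ its action on the auxiliary space $W_0\simeq W_{r_n}$, \[ E_n^\alpha=\Big\{\prod_{i=1}^{n-1}t^{(r_i)}(\xi_i)\Big\}\,\operatorname{tr}_0\big(E_0^\alpha\,T^{(r_n)}_{0,1\dots N}(\xi_n)\big)\,\Big\{\prod_{i=1}^{n}t^{(r_i)}(\xi_i)\Big\}^{-1}. \]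
   Context: For finite-dimensional spaces $W_r$ (of dimension $r+1$) one is given, for every pair $(W_r,W_s)$, an operator-valued function $R^{W_rW_s}(\lambda)\in\operatorname{End}(W_r\otimes W_s)$. For spaces labelled $a,b$ in a tensor product, $R_{ab}(\lambda)$ denotes this operator acting on factors $a,b$ (identity elsewhere). Yang–Baxter equation: for any three such spaces labelled $1,2,3$ and any $\lambda_1,\lambda_2,\lambda_3$, $R_{12}(\lambda_1-\lambda_2)R_{13}(\lambda_1-\lambda_3)R_{23}(\lambda_2-\lambda_3)=R_{23}(\lambda_2-\lambda_3)R_{13}(\lambda_1-\lambda_3)R_{12}(\lambda_1-\lambda_2)$. $P^{W_rW_r}$ is the permutation (flip) operator on $W_r\otimes W_r$. For a chosen auxiliary space $W_0$ (labelled 0) isomorphic to $W_{r_n}$, the monodromy matrix is $T^{(r_n)}_{0,1\dots N}(\lambda)=R^{W_0W_{r_N}}_{0N}(\lambda-\xi_N)\cdots R^{W_0W_{r_1}}_{01}(\lambda-\xi_1)\in\operatorname{End}(W_0\otimes\mathcal{H})$, and the transfer matrix is $t^{(r_n)}(\lambda)=\operatorname{tr}_0 T^{(r_n)}_{0,1\dots N}(\lambda)\in\operatorname{End}(\mathcal{H})$, the partial trace being over $W_0$. The transfer matrices $t^{(r_i)}(\xi_i)$ mutually commute. *)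

theory Defs
  imports Complex_Main
begin

text \<open>Tensor factors are labelled by natural numbers (slots); slot 0 is the
auxiliary space, slots 1..N the sites. A labelling rho assigns to slot i the label r of the space
W_r (of dimension r+1, basis indices 0..r). A basis vector of the tensor product over a finite set
S of slots is a multi-index x :: nat => nat with x i <= rho i for i in S and x i = 0 outside S.
An operator is given by its matrix entries A x y (row x, column y).\<close>

type_synonym mop = "(nat \<Rightarrow> nat) \<Rightarrow> (nat \<Rightarrow> nat) \<Rightarrow> complex"

text \<open>Family of R-matrices: Rm r s lam (i,j) (k,l) is the entry of R^{W_r W_s}(lam) in the
basis e_i (x) e_j (row), e_k (x) e_l (column), with i,k <= r and j,l <= s.\<close>
type_synonym rfam = "nat \<Rightarrow> nat \<Rightarrow> complex \<Rightarrow> nat \<times> nat \<Rightarrow> nat \<times> nat \<Rightarrow> complex"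

definition states :: "(nat \<Rightarrow> nat) \<Rightarrow> nat set \<Rightarrow> (nat \<Rightarrow> nat) set" where
  "states \<rho> S = {x. \<forall>i. (i \<in> S \<longrightarrow> x i \<le> \<rho> i) \<and> (i \<notin> S \<longrightarrow> x i = 0)}"

definition op_mult :: "(nat \<Rightarrow> nat) \<Rightarrow> nat set \<Rightarrow> mop \<Rightarrow> mop \<Rightarrow> mop" where
  "op_mult \<rho> S A B = (\<lambda>x y. \<Sum>z\<in>states \<rho> S. A x z * B z y)"

definition op_id :: mop where
  "op_id = (\<lambda>x y. if x = y then 1 else 0)"

definition op_eq :: "(nat \<Rightarrow> nat) \<Rightarrow> nat set \<Rightarrow> mop \<Rightarrow> mop \<Rightarrow> bool" where
  "op_eq \<rho> S A B \<longleftrightarrow> (\<forall>x\<in>states \<rho> S. \<forall>y\<in>states \<rho> S. A x y = B x y)"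

definition op_prod :: "(nat \<Rightarrow> nat) \<Rightarrow> nat set \<Rightarrow> mop list \<Rightarrow> mop" where
  "op_prod \<rho> S As = foldr (op_mult \<rho> S) As op_id"

definition invertible_op :: "(nat \<Rightarrow> nat) \<Rightarrow> nat set \<Rightarrow> mop \<Rightarrow> bool" where
  "invertible_op \<rho> S A \<longleftrightarrow>
     (\<exists>B. op_eq \<rho> S (op_mult \<rho> S A B) op_id \<and> op_eq \<rho> S (op_mult \<rho> S B A) op_id)"

definition local_op :: "nat \<Rightarrow> (nat \<Rightarrow> nat \<Rightarrow> complex) \<Rightarrow> mop" where
  "local_op a M = (\<lambda>x y. M (x a) (y a) * (if \<forall>c. c \<noteq> a \<longrightarrow> x c = y c then 1 else 0))"

definition two_site_op :: "nat \<Rightarrow> nat \<Rightarrow> (nat \<times> nat \<Rightarrow> nat \<times> nat \<Rightarrow> complex) \<Rightarrow> mop" where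
  "two_site_op a b M = (\<lambda>x y. M (x a, x b) (y a, y b) *
      (if \<forall>c. c \<noteq> a \<and> c \<noteq> b \<longrightarrow> x c = y c then 1 else 0))"

definition Rop :: "rfam \<Rightarrow> (nat \<Rightarrow> nat) \<Rightarrow> nat \<Rightarrow> nat \<Rightarrow> complex \<Rightarrow> mop" where
  "Rop Rm \<rho> a b lam = two_site_op a b (Rm (\<rho> a) (\<rho> b) lam)"

definition YBE :: "rfam \<Rightarrow> bool" where
  "YBE Rm \<longleftrightarrow> (\<forall>r s t (l1::complex) l2 l3.
     let \<rho> = (\<lambda>i::nat. if i = 1 then r else if i = 2 then s else if i = 3 then t else 0);
         S = {1,2,3::nat}
     in op_eq \<rho> S
          (op_mult \<rho> S (op_mult \<rho> S (Rop Rm \<rho> 1 2 (l1 - l2)) (Rop Rm \<rho> 1 3 (l1 - l3)))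
                        (Rop Rm \<rho> 2 3 (l2 - l3)))
          (op_mult \<rho> S (op_mult \<rho> S (Rop Rm \<rho> 2 3 (l2 - l3)) (Rop Rm \<rho> 1 3 (l1 - l3)))
                        (Rop Rm \<rho> 1 2 (l1 - l2))))"

definition initial_cond :: "rfam \<Rightarrow> bool" where
  "initial_cond Rm \<longleftrightarrow> (\<forall>r i j k l. i \<le> r \<longrightarrow> j \<le> r \<longrightarrow> k \<le> r \<longrightarrow> l \<le> r \<longrightarrow>
      Rm r r 0 (i, j) (k, l) = (if i = l \<and> j = k then 1 else 0))"

definition monodromy :: "rfam \<Rightarrow> (nat \<Rightarrow> nat) \<Rightarrow> nat \<Rightarrow> (nat \<Rightarrow> complex) \<Rightarrow> nat \<Rightarrow> complex \<Rightarrow> mop" where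
  "monodromy Rm \<rho> N \<xi> ra lam =
     op_prod (\<rho>(0 := ra)) {0..N}
       (map (\<lambda>i. Rop Rm (\<rho>(0 := ra)) 0 i (lam - \<xi> i)) (rev [1..<Suc N]))"

definition ptrace0 :: "nat \<Rightarrow> mop \<Rightarrow> mop" where
  "ptrace0 ra A = (\<lambda>x y. \<Sum>a\<le>ra. A (x(0 := a)) (y(0 := a)))"

definition transfer :: "rfam \<Rightarrow> (nat \<Rightarrow> nat) \<Rightarrow> nat \<Rightarrow> (nat \<Rightarrow> complex) \<Rightarrow> nat \<Rightarrow> complex \<Rightarrow> mop" where
  "transfer Rm \<rho> N \<xi> ra lam = ptrace0 ra (monodromy Rm \<rho> N \<xi> ra lam)"

end

theory Submission
  imports Defs "HOL-Combinatorics.Transposition"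
begin

text \<open>Write t_i for the transfer matrix at lam = xi_i. By the initial condition the factor
  R_{0i}(0) of the monodromy matrix T(xi_i) is the flip P_{0i}; pulling it through T(xi_i) moves
  all other factors from the auxiliary space to site i, so that tr_0(E_0 T(xi_i)) = L_i E_i R_i
  with L_i = R_{i,i-1} ... R_{i,1} and R_i = R_{i,N} ... R_{i,i+1}, and t_i = L_i R_i.
  The Yang-Baxter equation at the flip point gives unitarity up to a scalar,
  R_{ab}(lam) R_{ba}(-lam) = c 1, and with it the product t_1 ... t_{n-1} L_n collapses to a scalar
  multiple of R-matrices none of which acts on site n. Hence E_n commutes with t_1 ... t_{n-1} L_n
  and E_n = E_n t_1 ... t_n B = t_1 ... t_{n-1} L_n E_n R_n B = t_1 ... t_{n-1} tr_0(E_0 T(xi_n)) B.\<close>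

section \<open>Operators on tensor products\<close>

lemma sum_eq_single:
  assumes "finite A" "a \<in> A" "\<And>z. z \<in> A \<Longrightarrow> z \<noteq> a \<Longrightarrow> f z = 0"
  shows "sum f A = f a"
  using assms by (subst sum.mono_neutral_right[of A "{a}"]) auto

lemma finite_states:
  assumes "finite S"
  shows "finite (states \<rho> S)"
proof (rule finite_subset)
  define M where "M = Max (insert 0 (\<rho> ` S))"
  show "states \<rho> S \<subseteq> {x. \<forall>i. (i \<in> S \<longrightarrow> x i \<in> {..M}) \<and> (i \<notin> S \<longrightarrow> x i = 0)}"
  proof
    fix x assume "x \<in> states \<rho> S"
    moreover have "\<rho> i \<le> M" if "i \<in> S" for i
      unfolding M_def using assms that by (intro Max_ge) auto
    ultimately show "x \<in> {x. \<forall>i. (i \<in> S \<longrightarrow> x i \<in> {..M}) \<and> (i \<notin> S \<longrightarrow> x i = 0)}"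
      unfolding states_def by (auto intro: le_trans)
  qed
  show "finite {x. \<forall>i. (i \<in> S \<longrightarrow> x i \<in> {..M}) \<and> (i \<notin> S \<longrightarrow> x i = (0::nat))}"
    using assms by (intro finite_set_of_finite_funs) auto
qed

lemma op_eq_refl [simp]: "op_eq \<rho> S A A"
  by (simp add: op_eq_def)

lemma op_eq_sym: "op_eq \<rho> S A B \<Longrightarrow> op_eq \<rho> S B A"
  by (simp add: op_eq_def)

lemma op_eq_trans [trans]: "op_eq \<rho> S A B \<Longrightarrow> op_eq \<rho> S B C \<Longrightarrow> op_eq \<rho> S A C"
  by (simp add: op_eq_def)

lemma op_mult_cong:
  "op_eq \<rho> S A A' \<Longrightarrow> op_eq \<rho> S B B' \<Longrightarrow> op_eq \<rho> S (op_mult \<rho> S A B) (op_mult \<rho> S A' B')"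
  unfolding op_eq_def op_mult_def by (auto intro!: sum.cong)

lemma op_mult_cong_left: "op_eq \<rho> S A A' \<Longrightarrow> op_eq \<rho> S (op_mult \<rho> S A B) (op_mult \<rho> S A' B)"
  by (simp add: op_mult_cong)

lemma op_mult_cong_right: "op_eq \<rho> S B B' \<Longrightarrow> op_eq \<rho> S (op_mult \<rho> S A B) (op_mult \<rho> S A B')"
  by (simp add: op_mult_cong)

lemma op_mult_assoc:
  assumes "finite S"
  shows "op_mult \<rho> S (op_mult \<rho> S A B) C = op_mult \<rho> S A (op_mult \<rho> S B C)"
proof (intro ext)
  fix x y
  have "op_mult \<rho> S (op_mult \<rho> S A B) C x y
      = (\<Sum>z\<in>states \<rho> S. \<Sum>w\<in>states \<rho> S. A x w * B w z * C z y)"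
    unfolding op_mult_def by (simp add: sum_distrib_right)
  also have "\<dots> = (\<Sum>w\<in>states \<rho> S. \<Sum>z\<in>states \<rho> S. A x w * B w z * C z y)"
    by (rule sum.swap)
  also have "\<dots> = op_mult \<rho> S A (op_mult \<rho> S B C) x y"
    unfolding op_mult_def by (simp add: sum_distrib_left mult.assoc)
  finally show "op_mult \<rho> S (op_mult \<rho> S A B) C x y = op_mult \<rho> S A (op_mult \<rho> S B C) x y" .
qed

lemma op_mult_id_left:
  assumes "finite S"
  shows "op_eq \<rho> S (op_mult \<rho> S op_id A) A"
  unfolding op_eq_def op_mult_def op_id_def
proof (intro ballI)
  fix x y assume "x \<in> states \<rho> S"
  then show "(\<Sum>z\<in>states \<rho> S. (if x = z then 1 else 0) * A z y) = A x y"
    by (subst sum_eq_single[where a=x]) (auto simp: finite_states assms)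
qed

lemma op_mult_id_right:
  assumes "finite S"
  shows "op_eq \<rho> S (op_mult \<rho> S A op_id) A"
  unfolding op_eq_def op_mult_def op_id_def
proof (intro ballI)
  fix x y assume "y \<in> states \<rho> S"
  then show "(\<Sum>z\<in>states \<rho> S. A x z * (if z = y then 1 else 0)) = A x y"
    by (subst sum_eq_single[where a=y]) (auto simp: finite_states assms)
qed

lemma op_prod_Nil [simp]: "op_prod \<rho> S [] = op_id"
  by (simp add: op_prod_def)

lemma op_prod_Cons [simp]: "op_prod \<rho> S (A # As) = op_mult \<rho> S A (op_prod \<rho> S As)"
  by (simp add: op_prod_def)

lemma op_prod_single:
  assumes "finite S"
  shows "op_eq \<rho> S (op_prod \<rho> S [A]) A"
  using op_mult_id_right[OF assms] by simp

lemma op_prod_append: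
  assumes "finite S"
  shows "op_eq \<rho> S (op_prod \<rho> S (As @ Bs)) (op_mult \<rho> S (op_prod \<rho> S As) (op_prod \<rho> S Bs))"
proof (induction As)
  case Nil
  show ?case using op_eq_sym[OF op_mult_id_left[OF assms]] by simp
next
  case (Cons A As)
  then show ?case by (simp add: op_mult_cong_right op_mult_assoc[OF assms])
qed

lemma op_prod_append_cong_left:
  assumes "finite S" and "op_eq \<rho> S (op_prod \<rho> S As) (op_prod \<rho> S As')"
  shows "op_eq \<rho> S (op_prod \<rho> S (As @ Bs)) (op_prod \<rho> S (As' @ Bs))"
  by (meson assms op_mult_cong_left op_eq_sym op_eq_trans op_prod_append)

lemma op_prod_append_cong_right:
  assumes "finite S" and "op_eq \<rho> S (op_prod \<rho> S Bs) (op_prod \<rho> S Bs')"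
  shows "op_eq \<rho> S (op_prod \<rho> S (As @ Bs)) (op_prod \<rho> S (As @ Bs'))"
  by (meson assms op_mult_cong_right op_eq_sym op_eq_trans op_prod_append)

lemma op_prod_append3:
  assumes "finite S"
  shows "op_eq \<rho> S (op_prod \<rho> S (As @ Bs @ Cs))
    (op_mult \<rho> S (op_mult \<rho> S (op_prod \<rho> S As) (op_prod \<rho> S Bs)) (op_prod \<rho> S Cs))"
proof -
  have "op_eq \<rho> S (op_prod \<rho> S (As @ Bs @ Cs))
      (op_mult \<rho> S (op_prod \<rho> S As) (op_mult \<rho> S (op_prod \<rho> S Bs) (op_prod \<rho> S Cs)))"
    by (rule op_eq_trans[OF op_prod_append[OF assms] op_mult_cong_right[OF op_prod_append[OF assms]]])
  then show ?thesis
    by (simp only: op_mult_assoc[OF assms])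
qed

definition op_smult :: "complex \<Rightarrow> mop \<Rightarrow> mop" where
  "op_smult c A = (\<lambda>x y. c * A x y)"

lemma op_smult_one [simp]: "op_smult 1 A = A"
  by (simp add: op_smult_def)

lemma op_smult_smult [simp]: "op_smult c (op_smult d A) = op_smult (c * d) A"
  by (simp add: op_smult_def fun_eq_iff)

lemma op_mult_smult_left [simp]: "op_mult \<rho> S (op_smult c A) B = op_smult c (op_mult \<rho> S A B)"
  by (simp add: op_smult_def op_mult_def fun_eq_iff sum_distrib_left mult.assoc)

lemma op_mult_smult_right [simp]: "op_mult \<rho> S A (op_smult c B) = op_smult c (op_mult \<rho> S A B)"
  by (simp add: op_smult_def op_mult_def fun_eq_iff sum_distrib_left mult.left_commute)

lemma op_smult_cong: "op_eq \<rho> S A B \<Longrightarrow> op_eq \<rho> S (op_smult c A) (op_smult c B)"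
  by (simp add: op_smult_def op_eq_def)

definition op_commute :: "(nat \<Rightarrow> nat) \<Rightarrow> nat set \<Rightarrow> mop \<Rightarrow> mop \<Rightarrow> bool" where
  "op_commute \<rho> S A B \<longleftrightarrow> op_eq \<rho> S (op_mult \<rho> S A B) (op_mult \<rho> S B A)"

lemma op_commute_sym: "op_commute \<rho> S A B \<Longrightarrow> op_commute \<rho> S B A"
  by (simp add: op_commute_def op_eq_sym)

lemma op_commute_cong: "op_commute \<rho> S A B \<Longrightarrow> op_eq \<rho> S B B' \<Longrightarrow> op_commute \<rho> S A B'"
  unfolding op_commute_def by (meson op_mult_cong_left op_mult_cong_right op_eq_sym op_eq_trans)

lemma op_commute_smult: "op_commute \<rho> S A B \<Longrightarrow> op_commute \<rho> S A (op_smult c B)"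
  by (simp add: op_commute_def op_smult_cong)

lemma op_commute_prod:
  assumes fin: "finite S" and "\<And>B. B \<in> set Bs \<Longrightarrow> op_commute \<rho> S A B"
  shows "op_commute \<rho> S A (op_prod \<rho> S Bs)"
  using assms(2)
proof (induction Bs)
  case Nil
  show ?case
    unfolding op_commute_def op_prod_Nil
    using op_eq_trans[OF op_mult_id_right[OF fin] op_eq_sym[OF op_mult_id_left[OF fin]]] .
next
  case (Cons B Bs)
  let ?m = "op_mult \<rho> S" and ?P = "op_prod \<rho> S Bs"
  have "op_eq \<rho> S (?m A (?m B ?P)) (?m (?m A B) ?P)"
    by (simp add: op_mult_assoc[OF fin])
  also have "op_eq \<rho> S \<dots> (?m (?m B A) ?P)"
    using Cons.prems by (simp add: op_commute_def op_mult_cong_left)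
  also have "op_eq \<rho> S \<dots> (?m B (?m A ?P))"
    by (simp add: op_mult_assoc[OF fin])
  also have "op_eq \<rho> S \<dots> (?m B (?m ?P A))"
    using Cons by (simp add: op_commute_def op_mult_cong_right)
  also have "op_eq \<rho> S \<dots> (?m (?m B ?P) A)"
    by (simp add: op_mult_assoc[OF fin])
  finally show ?case by (simp add: op_commute_def)
qed

lemma op_prod_append_commute:
  assumes fin: "finite S" and "\<And>A B. A \<in> set As \<Longrightarrow> B \<in> set Bs \<Longrightarrow> op_commute \<rho> S A B"
  shows "op_eq \<rho> S (op_prod \<rho> S (As @ Bs)) (op_prod \<rho> S (Bs @ As))"
proof -
  have "op_commute \<rho> S (op_prod \<rho> S As) (op_prod \<rho> S Bs)"
    using assms by (intro op_commute_prod op_commute_sym[OF op_commute_prod]) (auto intro: op_commute_sym)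
  then show ?thesis
    unfolding op_commute_def
    by (meson fin op_eq_sym op_eq_trans op_prod_append)
qed

lemma op_prod_drop_id:
  assumes "finite S"
  shows "op_eq \<rho> S (op_prod \<rho> S (As @ op_id # Bs)) (op_prod \<rho> S (As @ Bs))"
  using assms by (intro op_prod_append_cong_right) (simp_all add: op_mult_id_left)

lemma op_prod_cancel:
  assumes fin: "finite S" and XY: "op_eq \<rho> S (op_mult \<rho> S X Y) (op_smult c op_id)"
  shows "op_eq \<rho> S (op_prod \<rho> S (As @ X # Y # Bs)) (op_smult c (op_prod \<rho> S (As @ Bs)))"
proof -
  have "op_eq \<rho> S (op_prod \<rho> S (X # Y # Bs)) (op_mult \<rho> S (op_smult c op_id) (op_prod \<rho> S Bs))"
    using op_mult_cong_left[OF XY] by (simp add: op_mult_assoc[OF fin])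
  also have "op_eq \<rho> S \<dots> (op_smult c (op_prod \<rho> S Bs))"
    by (simp add: op_smult_cong op_mult_id_left[OF fin])
  finally have "op_eq \<rho> S (op_prod \<rho> S (X # Y # Bs)) (op_smult c (op_prod \<rho> S Bs))" .
  then have "op_eq \<rho> S (op_prod \<rho> S (As @ X # Y # Bs)) (op_mult \<rho> S (op_prod \<rho> S As) (op_smult c (op_prod \<rho> S Bs)))"
    using op_prod_append[OF fin] op_mult_cong_right by (meson op_eq_trans)
  also have "op_eq \<rho> S \<dots> (op_smult c (op_prod \<rho> S (As @ Bs)))"
    using op_smult_cong[OF op_eq_sym[OF op_prod_append[OF fin]]] by simp
  finally show ?thesis .
qed

text \<open>In B_1 X_1 B_2 X_2 ... B_m X_m Y_m ... Y_1 the innermost pair X_m Y_m is a scalar, after which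
  Y_{m-1} ... Y_1 commute past B_m, exposing the next pair.\<close>
lemma op_prod_cancel_nested:
  assumes fin: "finite S"
    and XY: "\<And>i. 1 \<le> i \<Longrightarrow> i \<le> m \<Longrightarrow> \<exists>c. op_eq \<rho> S (op_mult \<rho> S (X i) (Y i)) (op_smult c op_id)"
    and YB: "\<And>k i A. 1 \<le> k \<Longrightarrow> k < i \<Longrightarrow> i \<le> m \<Longrightarrow> A \<in> set (B i) \<Longrightarrow> op_commute \<rho> S (Y k) A"
  shows "\<exists>c. op_eq \<rho> S (op_prod \<rho> S (concat (map (\<lambda>i. B i @ [X i]) [1..<Suc m]) @ map Y (rev [1..<Suc m])))
    (op_smult c (op_prod \<rho> S (concat (map B [1..<Suc m]))))"
  using XY YB
proof (induction m)
  case 0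
  show ?case by (rule exI[of _ 1]) simp
next
  case (Suc m)
  let ?pr = "op_prod \<rho> S"
  let ?BX = "concat (map (\<lambda>i. B i @ [X i]) [1..<Suc m])" and ?Ys = "map Y (rev [1..<Suc m])"
    and ?Bs = "concat (map B [1..<Suc m])"
  obtain c where c: "op_eq \<rho> S (op_mult \<rho> S (X (Suc m)) (Y (Suc m))) (op_smult c op_id)"
    using Suc.prems(1)[of "Suc m"] by auto
  obtain c' where c': "op_eq \<rho> S (?pr (?BX @ ?Ys)) (op_smult c' (?pr ?Bs))"
    using Suc.IH Suc.prems by (metis le_SucI less_Suc_eq_le)
  have "op_eq \<rho> S (?pr ((?BX @ B (Suc m)) @ X (Suc m) # Y (Suc m) # ?Ys)) (op_smult c (?pr ((?BX @ B (Suc m)) @ ?Ys)))"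
    by (rule op_prod_cancel[OF fin c])
  also have "op_eq \<rho> S \<dots> (op_smult c (?pr (?BX @ ?Ys @ B (Suc m))))"
  proof (rule op_smult_cong)
    have "op_eq \<rho> S (?pr (B (Suc m) @ ?Ys)) (?pr (?Ys @ B (Suc m)))"
    proof (rule op_prod_append_commute[OF fin])
      fix A Y' assume "A \<in> set (B (Suc m))" "Y' \<in> set ?Ys"
      then show "op_commute \<rho> S A Y'"
        using Suc.prems(2)[where i="Suc m"] by (auto intro: op_commute_sym)
    qed
    then show "op_eq \<rho> S (?pr ((?BX @ B (Suc m)) @ ?Ys)) (?pr (?BX @ ?Ys @ B (Suc m)))"
      unfolding append_assoc by (rule op_prod_append_cong_right[OF fin])
  qed
  also have "op_eq \<rho> S \<dots> (op_smult c (op_mult \<rho> S (?pr (?BX @ ?Ys)) (?pr (B (Suc m)))))"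
    unfolding append_assoc[symmetric] by (intro op_smult_cong op_prod_append[OF fin])
  also have "op_eq \<rho> S \<dots> (op_smult c (op_mult \<rho> S (op_smult c' (?pr ?Bs)) (?pr (B (Suc m)))))"
    by (intro op_smult_cong op_mult_cong_left c')
  also have "op_eq \<rho> S \<dots> (op_smult (c * c') (?pr (concat (map B [1..<Suc (Suc m)]))))"
    using op_prod_append[OF fin, of \<rho> ?Bs "B (Suc m)"] by (simp add: op_smult_cong op_eq_sym)
  finally show ?case by auto
qed

lemma op_commute_through_right_inverse:
  assumes fin: "finite S" and inv: "op_eq \<rho> S (op_mult \<rho> S T B) op_id"
    and T: "op_eq \<rho> S T (op_mult \<rho> S Q R)" and EQ: "op_commute \<rho> S E Q"
  shows "op_eq \<rho> S E (op_mult \<rho> S (op_mult \<rho> S Q (op_mult \<rho> S E R)) B)"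
proof -
  let ?m = "op_mult \<rho> S"
  have "op_eq \<rho> S E (?m E (?m T B))"
    using op_mult_cong_right[OF inv, of E] op_mult_id_right[OF fin, of \<rho> E]
    by (meson op_eq_sym op_eq_trans)
  also have "op_eq \<rho> S \<dots> (?m (?m (?m E Q) R) B)"
    using op_mult_cong_left[OF op_mult_cong_right[OF T, of E], of B]
    by (simp add: op_mult_assoc[OF fin])
  also have "op_eq \<rho> S \<dots> (?m (?m (?m Q E) R) B)"
    using EQ unfolding op_commute_def by (intro op_mult_cong_left)
  finally show ?thesis by (simp add: op_mult_assoc[OF fin])
qed

section \<open>Locality\<close>

text \<open>acts_on K A says that A = A_K \<otimes> 1 for an operator A_K on the slots in K.\<close>
definition acts_on :: "nat set \<Rightarrow> mop \<Rightarrow> bool" where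
  "acts_on K A \<longleftrightarrow> (\<forall>x y. (\<exists>c. c \<notin> K \<and> x c \<noteq> y c) \<longrightarrow> A x y = 0) \<and>
    (\<forall>x y x' y'. (\<forall>c\<in>K. x c = x' c \<and> y c = y' c) \<longrightarrow> (\<forall>c. c \<notin> K \<longrightarrow> x c = y c) \<longrightarrow>
        (\<forall>c. c \<notin> K \<longrightarrow> x' c = y' c) \<longrightarrow> A x y = A x' y')"

lemma acts_on_two_site_op: "acts_on {a, b} (two_site_op a b M)"
  unfolding acts_on_def two_site_op_def by auto

lemma acts_on_Rop: "acts_on {a, b} (Rop Rm \<rho> a b lam)"
  unfolding Rop_def by (rule acts_on_two_site_op)

lemma acts_on_local_op: "acts_on {a} (local_op a M)"
  unfolding acts_on_def local_op_def by auto

lemma acts_on_op_id: "acts_on {} op_id"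
  unfolding acts_on_def op_id_def by (auto simp: fun_eq_iff)

lemma acts_on_offdiag_zero: "acts_on K A \<Longrightarrow> c \<notin> K \<Longrightarrow> x c \<noteq> y c \<Longrightarrow> A x y = 0"
  unfolding acts_on_def by blast

lemma acts_on_entry_cong:
  "acts_on K A \<Longrightarrow> (\<And>c. c \<in> K \<Longrightarrow> x c = x' c \<and> y c = y' c) \<Longrightarrow> (\<And>c. c \<notin> K \<Longrightarrow> x c = y c)
    \<Longrightarrow> (\<And>c. c \<notin> K \<Longrightarrow> x' c = y' c) \<Longrightarrow> A x y = A x' y'"
  unfolding acts_on_def by blast

lemma op_mult_acts_on_disjoint:
  assumes fin: "finite S" and A: "acts_on K A" and B: "acts_on L B" and disj: "K \<inter> L = {}"
    and x: "x \<in> states \<rho> S" and y: "y \<in> states \<rho> S"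
  shows "op_mult \<rho> S A B x y
    = A x (\<lambda>c. if c \<in> K then y c else x c) * B (\<lambda>c. if c \<in> K then y c else x c) y"
  unfolding op_mult_def
proof (rule sum_eq_single)
  show "finite (states \<rho> S)" using fin by (rule finite_states)
  show "(\<lambda>c. if c \<in> K then y c else x c) \<in> states \<rho> S"
    using x y unfolding states_def by auto
  fix z assume "z \<in> states \<rho> S" "z \<noteq> (\<lambda>c. if c \<in> K then y c else x c)"
  then obtain c where c: "z c \<noteq> (if c \<in> K then y c else x c)" by auto
  show "A x z * B z y = 0"
  proof (cases "\<exists>c. c \<notin> K \<and> x c \<noteq> z c")
    case True
    then show ?thesis using acts_on_offdiag_zero[OF A] by auto
  next
    case False
    then have "c \<in> K" using c by (metis (full_types))
    then have "c \<notin> L" using disj by auto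
    then show ?thesis using acts_on_offdiag_zero[OF B, of c z y] c \<open>c \<in> K\<close> by auto
  qed
qed

lemma op_commute_acts_on_disjoint:
  assumes fin: "finite S" and A: "acts_on K A" and B: "acts_on L B" and disj: "K \<inter> L = {}"
  shows "op_commute \<rho> S A B"
  unfolding op_commute_def op_eq_def
proof (intro ballI)
  fix x y assume x: "x \<in> states \<rho> S" and y: "y \<in> states \<rho> S"
  define z where "z = (\<lambda>c. if c \<in> K then y c else x c)"
  define z' where "z' = (\<lambda>c. if c \<in> L then y c else x c)"
  have AB: "op_mult \<rho> S A B x y = A x z * B z y"
    unfolding z_def by (rule op_mult_acts_on_disjoint[OF fin A B disj x y])
  have BA: "op_mult \<rho> S B A x y = B x z' * A z' y"
    unfolding z'_def by (rule op_mult_acts_on_disjoint[OF fin B A _ x y]) (use disj in auto)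
  show "op_mult \<rho> S A B x y = op_mult \<rho> S B A x y"
  proof (cases "\<forall>c. c \<notin> K \<and> c \<notin> L \<longrightarrow> x c = y c")
    case True
    have "A x z = A z' y"
      by (rule acts_on_entry_cong[OF A]) (use True disj in \<open>auto simp: z_def z'_def\<close>)
    moreover have "B z y = B x z'"
      by (rule acts_on_entry_cong[OF B]) (use True disj in \<open>auto simp: z_def z'_def\<close>)
    ultimately show ?thesis using AB BA by simp
  next
    case False
    then obtain c where c: "c \<notin> K" "c \<notin> L" "x c \<noteq> y c" by auto
    have "B z y = 0" by (rule acts_on_offdiag_zero[OF B c(2)]) (use c in \<open>simp add: z_def\<close>)
    moreover have "A z' y = 0" by (rule acts_on_offdiag_zero[OF A c(1)]) (use c in \<open>simp add: z'_def\<close>)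
    ultimately show ?thesis using AB BA by simp
  qed
qed

section \<open>Slot transpositions and the flip\<close>

definition swap_op :: "nat \<Rightarrow> nat \<Rightarrow> mop \<Rightarrow> mop" where
  "swap_op a b A = (\<lambda>x y. A (x \<circ> transpose a b) (y \<circ> transpose a b))"

lemma comp_transpose_in_states:
  assumes "a \<in> S" "b \<in> S" "\<rho> a = \<rho> b" "x \<in> states \<rho> S"
  shows "x \<circ> transpose a b \<in> states \<rho> S"
  using assms unfolding states_def by (auto simp: transpose_def)

lemma comp_transpose_involutory [simp]: "x \<circ> transpose a b \<circ> transpose a b = x"
  by (simp add: comp_assoc)

lemma swap_op_swap_op [simp]: "swap_op a b (swap_op a b A) = A"
  by (simp add: swap_op_def)

lemma comp_transpose_eq_iff: "x \<circ> transpose a b = y \<circ> transpose a b \<longleftrightarrow> x = y"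
  by (metis comp_transpose_involutory)

lemma transpose_eq_iff_eq_transpose: "transpose a b e = c \<longleftrightarrow> e = transpose a b c"
  by auto

lemma swap_op_id [simp]: "swap_op a b op_id = op_id"
  by (simp add: swap_op_def op_id_def comp_transpose_eq_iff)

lemma swap_op_mult:
  assumes "a \<in> S" "b \<in> S" "\<rho> a = \<rho> b"
  shows "swap_op a b (op_mult \<rho> S A B) = op_mult \<rho> S (swap_op a b A) (swap_op a b B)"
  unfolding swap_op_def op_mult_def fun_eq_iff
  by (intro allI sum.reindex_bij_witness[where i="\<lambda>z. z \<circ> transpose a b" and j="\<lambda>z. z \<circ> transpose a b"])
     (auto intro: comp_transpose_in_states[OF assms])

lemma swap_op_prod:
  assumes "a \<in> S" "b \<in> S" "\<rho> a = \<rho> b"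
  shows "swap_op a b (op_prod \<rho> S As) = op_prod \<rho> S (map (swap_op a b) As)"
  by (induction As) (simp_all add: swap_op_mult[OF assms])

lemma all_transpose_iff: "(\<forall>e. P (transpose a b e)) \<longleftrightarrow> (\<forall>e. P e)"
  by (metis transpose_involutory)

lemma swap_op_two_site_op: "swap_op a b (two_site_op c d M) = two_site_op (transpose a b c) (transpose a b d) M"
proof -
  have "(\<forall>e. e \<noteq> c \<and> e \<noteq> d \<longrightarrow> x (transpose a b e) = y (transpose a b e))
      \<longleftrightarrow> (\<forall>e. e \<noteq> transpose a b c \<and> e \<noteq> transpose a b d \<longrightarrow> x e = y e)" for x y :: "nat \<Rightarrow> nat"
    by (subst all_transpose_iff[where a=a and b=b, symmetric]) (simp add: transpose_eq_iff_eq_transpose)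
  then show ?thesis
    unfolding swap_op_def two_site_op_def by (simp add: fun_eq_iff)
qed

lemma swap_op_local_op: "swap_op a b (local_op c M) = local_op (transpose a b c) M"
proof -
  have "(\<forall>e. e \<noteq> c \<longrightarrow> x (transpose a b e) = y (transpose a b e))
      \<longleftrightarrow> (\<forall>e. e \<noteq> transpose a b c \<longrightarrow> x e = y e)" for x y :: "nat \<Rightarrow> nat"
    by (subst all_transpose_iff[where a=a and b=b, symmetric]) (simp add: transpose_eq_iff_eq_transpose)
  then show ?thesis
    unfolding swap_op_def local_op_def by (simp add: fun_eq_iff)
qed

lemma eq_comp_transpose_iff:
  assumes "a \<noteq> b"
  shows "z = x \<circ> transpose a b \<longleftrightarrow> z a = x b \<and> z b = x a \<and> (\<forall>c. c \<noteq> a \<and> c \<noteq> b \<longrightarrow> z c = x c)"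
proof
  assume "z = x \<circ> transpose a b"
  then show "z a = x b \<and> z b = x a \<and> (\<forall>c. c \<noteq> a \<and> c \<noteq> b \<longrightarrow> z c = x c)"
    by simp
next
  assume z: "z a = x b \<and> z b = x a \<and> (\<forall>c. c \<noteq> a \<and> c \<noteq> b \<longrightarrow> z c = x c)"
  show "z = x \<circ> transpose a b"
  proof
    fix c
    show "z c = (x \<circ> transpose a b) c"
      using z assms by (cases "c = a"; cases "c = b") auto
  qed
qed

definition is_flip :: "(nat \<Rightarrow> nat) \<Rightarrow> nat set \<Rightarrow> nat \<Rightarrow> nat \<Rightarrow> mop \<Rightarrow> bool" where
  "is_flip \<rho> S a b P \<longleftrightarrow>
     (\<forall>x\<in>states \<rho> S. \<forall>z\<in>states \<rho> S. P x z = (if z = x \<circ> transpose a b then 1 else 0))"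

lemma initial_cond_is_flip:
  assumes init: "initial_cond Rm" and ab: "a \<noteq> b" "a \<in> S" "b \<in> S" "\<rho> a = r" "\<rho> b = r"
  shows "is_flip \<rho> S a b (two_site_op a b (Rm r r 0))"
  unfolding is_flip_def
proof (intro ballI)
  fix x z assume x: "x \<in> states \<rho> S" and z: "z \<in> states \<rho> S"
  have "x a \<le> r" "x b \<le> r" "z a \<le> r" "z b \<le> r"
    using x z ab unfolding states_def by auto
  then have "Rm r r 0 (x a, x b) (z a, z b) = (if x a = z b \<and> x b = z a then 1 else 0)"
    using init unfolding initial_cond_def by blast
  moreover have "(x a = z b \<and> x b = z a \<and> (\<forall>c. c \<noteq> a \<and> c \<noteq> b \<longrightarrow> x c = z c)) \<longleftrightarrow> z = x \<circ> transpose a b"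
    using eq_comp_transpose_iff[OF ab(1), of z x] by auto
  ultimately show "two_site_op a b (Rm r r 0) x z = (if z = x \<circ> transpose a b then 1 else 0)"
    unfolding two_site_op_def by auto
qed

context
  fixes \<rho> S a b P
  assumes fin: "finite S" and flip: "is_flip \<rho> S a b P"
    and ab: "a \<in> S" "b \<in> S" "\<rho> a = \<rho> b"
begin

lemma op_mult_flip_left: "x \<in> states \<rho> S \<Longrightarrow> op_mult \<rho> S P A x y = A (x \<circ> transpose a b) y"
  unfolding op_mult_def
  by (subst sum_eq_single[where a="x \<circ> transpose a b"])
     (use flip comp_transpose_in_states[OF ab] in \<open>auto simp: is_flip_def finite_states[OF fin]\<close>)

lemma op_mult_flip_right: "y \<in> states \<rho> S \<Longrightarrow> op_mult \<rho> S A P x y = A x (y \<circ> transpose a b)"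
  unfolding op_mult_def
  by (subst sum_eq_single[where a="y \<circ> transpose a b"])
     (use flip comp_transpose_in_states[OF ab] in \<open>auto simp: is_flip_def finite_states[OF fin]\<close>)

lemma flip_mult_flip: "op_eq \<rho> S (op_mult \<rho> S P P) op_id"
  using flip comp_transpose_in_states[OF ab]
  by (auto simp: op_eq_def op_mult_flip_left is_flip_def op_id_def)

lemma flip_conj: "op_eq \<rho> S (op_mult \<rho> S P A) (op_mult \<rho> S (swap_op a b A) P)"
  by (simp add: op_eq_def op_mult_flip_left op_mult_flip_right swap_op_def)

lemma op_eq_flip_cancel_right:
  assumes "op_eq \<rho> S (op_mult \<rho> S A P) (op_mult \<rho> S B P)"
  shows "op_eq \<rho> S A B"
proof -
  have "op_eq \<rho> S A (op_mult \<rho> S (op_mult \<rho> S A P) P)"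
    using op_mult_cong_right[OF flip_mult_flip, of A] op_mult_id_right[OF fin, of \<rho> A]
    by (simp add: op_mult_assoc[OF fin]) (meson op_eq_sym op_eq_trans)
  also have "op_eq \<rho> S \<dots> (op_mult \<rho> S (op_mult \<rho> S B P) P)"
    using assms by (rule op_mult_cong_left)
  also have "op_eq \<rho> S \<dots> B"
    using op_mult_cong_right[OF flip_mult_flip, of B] op_mult_id_right[OF fin, of \<rho> B]
    by (simp add: op_mult_assoc[OF fin]) (meson op_eq_trans)
  finally show ?thesis .
qed

lemma op_prod_flip_Cons:
  "op_eq \<rho> S (op_prod \<rho> S (P # As)) (op_prod \<rho> S (map (swap_op a b) As @ [P]))"
proof -
  have "op_eq \<rho> S (op_prod \<rho> S (P # As)) (op_mult \<rho> S (op_prod \<rho> S (map (swap_op a b) As)) P)"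
    using flip_conj[of "op_prod \<rho> S As"] by (simp add: swap_op_prod[OF ab])
  also have "op_eq \<rho> S \<dots> (op_prod \<rho> S (map (swap_op a b) As @ [P]))"
    using op_prod_append[OF fin] op_prod_single[OF fin]
    by (meson op_eq_sym op_eq_trans op_mult_cong_right)
  finally show ?thesis .
qed

lemma op_prod_flip_snoc:
  "op_eq \<rho> S (op_prod \<rho> S (As @ [P])) (op_prod \<rho> S (P # map (swap_op a b) As))"
  using op_prod_flip_Cons[of "map (swap_op a b) As"] by (simp add: comp_def op_eq_sym)

end

section \<open>Unitarity from the Yang-Baxter equation\<close>

type_synonym pair_mat = "nat \<times> nat \<Rightarrow> nat \<times> nat \<Rightarrow> complex"

definition pair_mult :: "nat \<Rightarrow> nat \<Rightarrow> pair_mat \<Rightarrow> pair_mat \<Rightarrow> pair_mat" where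
  "pair_mult r s M M' = (\<lambda>u v. \<Sum>p\<le>r. \<Sum>q\<le>s. M u (p, q) * M' (p, q) v)"

definition flip_factors :: "pair_mat \<Rightarrow> pair_mat" where
  "flip_factors M = (\<lambda>u v. M (snd u, fst u) (snd v, fst v))"

lemma two_site_op_flip_slots: "two_site_op b a M = two_site_op a b (flip_factors M)"
  unfolding two_site_op_def flip_factors_def by (auto simp: fun_eq_iff conj_commute)

lemma two_site_op_mult:
  assumes fin: "finite S" and ab: "a \<noteq> b" "a \<in> S" "b \<in> S"
    and x: "x \<in> states \<rho> S" and y: "y \<in> states \<rho> S"
  shows "op_mult \<rho> S (two_site_op a b M) (two_site_op a b M') x y
    = two_site_op a b (pair_mult (\<rho> a) (\<rho> b) M M') x y"
proof -
  define f where "f z = two_site_op a b M x z * two_site_op a b M' z y" for z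
  define g where "g pq = x(a := fst pq, b := snd pq)" for pq :: "nat \<times> nat"
  have g_states: "g ` ({..\<rho> a} \<times> {..\<rho> b}) \<subseteq> states \<rho> S"
    using x ab unfolding g_def states_def by auto
  have "op_mult \<rho> S (two_site_op a b M) (two_site_op a b M') x y = sum f (states \<rho> S)"
    unfolding op_mult_def f_def ..
  also have "\<dots> = sum f (g ` ({..\<rho> a} \<times> {..\<rho> b}))"
  proof (rule sum.mono_neutral_cong_right[OF finite_states[OF fin] g_states])
    show "\<forall>z\<in>states \<rho> S - g ` ({..\<rho> a} \<times> {..\<rho> b}). f z = 0"
    proof
      fix z assume z: "z \<in> states \<rho> S - g ` ({..\<rho> a} \<times> {..\<rho> b})"
      have "\<not> (\<forall>c. c \<noteq> a \<and> c \<noteq> b \<longrightarrow> x c = z c)"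
      proof
        assume "\<forall>c. c \<noteq> a \<and> c \<noteq> b \<longrightarrow> x c = z c"
        then have "z = g (z a, z b)"
          unfolding g_def by (auto simp: fun_eq_iff)
        moreover have "(z a, z b) \<in> {..\<rho> a} \<times> {..\<rho> b}"
          using z ab unfolding states_def by auto
        ultimately show False
          using z by blast
      qed
      then show "f z = 0" unfolding f_def two_site_op_def by auto
    qed
  qed simp
  also have "\<dots> = sum (f \<circ> g) ({..\<rho> a} \<times> {..\<rho> b})"
    using ab(1) by (intro sum.reindex inj_onI) (auto simp: g_def fun_eq_iff prod_eq_iff dest: spec[of _ a] spec[of _ b])
  also have "\<dots> = (\<Sum>p\<le>\<rho> a. \<Sum>q\<le>\<rho> b. f (g (p, q)))"
    by (simp add: sum.cartesian_product)
  also have "\<dots> = two_site_op a b (pair_mult (\<rho> a) (\<rho> b) M M') x y"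
    unfolding f_def g_def two_site_op_def pair_mult_def using ab
    by (simp add: sum_distrib_right)
  finally show ?thesis .
qed

text \<open>The matrix of R_{12}(lam) R_{21}(-lam) on W_r \<otimes> W_s.\<close>
definition unitarity_product :: "rfam \<Rightarrow> nat \<Rightarrow> nat \<Rightarrow> complex \<Rightarrow> pair_mat" where
  "unitarity_product Rm r s lam = pair_mult r s (Rm r s lam) (flip_factors (Rm s r (- lam)))"

text \<open>The Yang-Baxter equation at spectral parameters (lam, 0, lam) with the initial condition
  turns into R12 P R23 = R23 P R12 with P the flip of the two W_r slots 1 and 3; conjugating by
  P separates the two sides into operators on slots 1, 2 and on slots 2, 3.\<close>
lemma ybe_flip_conjugated:
  fixes r s :: nat and lam :: complex
  defines "\<rho> \<equiv> \<lambda>i::nat. if i = 1 then r else if i = 2 then s else if i = 3 then r else 0"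
    and "S \<equiv> {1, 2, 3 :: nat}"
  assumes ybe: "YBE Rm" and init: "initial_cond Rm"
  shows "op_eq \<rho> S
    (op_mult \<rho> S (two_site_op 1 2 (Rm r s lam)) (two_site_op 1 2 (flip_factors (Rm s r (- lam)))))
    (op_mult \<rho> S (two_site_op 2 3 (Rm s r (- lam))) (two_site_op 2 3 (flip_factors (Rm r s lam))))"
proof -
  let ?m = "op_mult \<rho> S"
  define R12 where "R12 = two_site_op 1 2 (Rm r s lam)"
  define R23 where "R23 = two_site_op 2 3 (Rm s r (- lam))"
  define P where "P = two_site_op 1 3 (Rm r r 0)"
  have fin: "finite S" by (simp add: S_def)
  have slots: "(1::nat) \<in> S" "(3::nat) \<in> S" "\<rho> 1 = \<rho> 3" by (auto simp: S_def \<rho>_def)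
  have flip: "is_flip \<rho> S 1 3 P"
    unfolding P_def by (rule initial_cond_is_flip[OF init]) (auto simp: S_def \<rho>_def)
  have "op_eq \<rho> S (?m (?m R12 P) R23) (?m (?m R23 P) R12)"
    using ybe[unfolded YBE_def, rule_format, of r s r lam 0 lam]
    by (simp add: Let_def S_def \<rho>_def Rop_def R12_def P_def R23_def)
  moreover have "op_eq \<rho> S (?m (?m X P) Y) (?m (?m X (swap_op 1 3 Y)) P)" for X Y
    using op_mult_cong_right[OF flip_conj[OF fin flip slots, of Y], of X]
    by (simp add: op_mult_assoc[OF fin])
  ultimately have "op_eq \<rho> S (?m (?m R12 (swap_op 1 3 R23)) P) (?m (?m R23 (swap_op 1 3 R12)) P)"
    by (meson op_eq_sym op_eq_trans)
  then have "op_eq \<rho> S (?m R12 (swap_op 1 3 R23)) (?m R23 (swap_op 1 3 R12))"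
    by (rule op_eq_flip_cancel_right[OF fin flip slots])
  moreover have "swap_op 1 3 R23 = two_site_op 1 2 (flip_factors (Rm s r (- lam)))"
    unfolding R23_def swap_op_two_site_op by (simp add: transpose_def) (rule two_site_op_flip_slots)
  moreover have "swap_op 1 3 R12 = two_site_op 2 3 (flip_factors (Rm r s lam))"
    unfolding R12_def swap_op_two_site_op by (simp add: transpose_def) (rule two_site_op_flip_slots)
  ultimately show ?thesis by (simp add: R12_def R23_def)
qed

lemma unitarity_product_entries:
  assumes ybe: "YBE Rm" and init: "initial_cond Rm"
    and le: "i \<le> r" "k \<le> r" "j \<le> s" "l \<le> s" "m \<le> r" "m' \<le> r"
  shows "unitarity_product Rm r s lam (i, j) (k, l) * (if m = m' then 1 else 0)
    = unitarity_product Rm s r (- lam) (j, m) (l, m') * (if i = k then 1 else 0)"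
proof -
  define \<rho> where "\<rho> = (\<lambda>i::nat. if i = 1 then r else if i = 2 then s else if i = 3 then r else 0)"
  define S where "S = {1, 2, 3 :: nat}"
  define x where "x = (\<lambda>c::nat. if c = 1 then i else if c = 2 then j else if c = 3 then m else 0)"
  define y where "y = (\<lambda>c::nat. if c = 1 then k else if c = 2 then l else if c = 3 then m' else 0)"
  have fin: "finite S" by (simp add: S_def)
  have x: "x \<in> states \<rho> S" and y: "y \<in> states \<rho> S"
    using le unfolding x_def y_def states_def \<rho>_def S_def by auto
  have "op_mult \<rho> S (two_site_op 1 2 (Rm r s lam)) (two_site_op 1 2 (flip_factors (Rm s r (- lam)))) x y
      = op_mult \<rho> S (two_site_op 2 3 (Rm s r (- lam))) (two_site_op 2 3 (flip_factors (Rm r s lam))) x y"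
    using ybe_flip_conjugated[OF ybe init, of r s lam] x y unfolding op_eq_def \<rho>_def S_def by blast
  then have "two_site_op 1 2 (unitarity_product Rm r s lam) x y
      = two_site_op 2 3 (unitarity_product Rm s r (- lam)) x y"
    unfolding unitarity_product_def
    using two_site_op_mult[OF fin _ _ _ x y, of 1 2] two_site_op_mult[OF fin _ _ _ x y, of 2 3]
    by (simp add: S_def \<rho>_def)
  moreover have "(\<forall>c. c \<noteq> 1 \<and> c \<noteq> 2 \<longrightarrow> x c = y c) \<longleftrightarrow> m = m'"
    unfolding x_def y_def by (auto dest: spec[of _ 3])
  moreover have "(\<forall>c. c \<noteq> 2 \<and> c \<noteq> 3 \<longrightarrow> x c = y c) \<longleftrightarrow> i = k"
    unfolding x_def y_def by (auto dest: spec[of _ 1])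
  ultimately show ?thesis
    unfolding two_site_op_def by (simp add: x_def y_def)
qed

lemma unitarity_product_scalar:
  assumes ybe: "YBE Rm" and init: "initial_cond Rm"
    and le: "i \<le> r" "k \<le> r" "j \<le> s" "l \<le> s"
  shows "unitarity_product Rm r s lam (i, j) (k, l)
    = (if i = k \<and> j = l then unitarity_product Rm r s lam (0, 0) (0, 0) else 0)"
  using unitarity_product_entries[OF ybe init le, where m=0 and m'=0 and lam=lam]
    unitarity_product_entries[OF ybe init le(3,4), where j=0 and l=0 and m=0 and m'=0 and lam="- lam"]
  by auto

lemma Rop_unitarity:
  assumes ybe: "YBE Rm" and init: "initial_cond Rm" and fin: "finite S"
    and ab: "a \<noteq> b" "a \<in> S" "b \<in> S"
  shows "op_eq \<rho> S (op_mult \<rho> S (Rop Rm \<rho> a b lam) (Rop Rm \<rho> b a (- lam)))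
    (op_smult (unitarity_product Rm (\<rho> a) (\<rho> b) lam (0, 0) (0, 0)) op_id)"
  unfolding op_eq_def
proof (intro ballI)
  fix x y assume x: "x \<in> states \<rho> S" and y: "y \<in> states \<rho> S"
  have le: "x a \<le> \<rho> a" "y a \<le> \<rho> a" "x b \<le> \<rho> b" "y b \<le> \<rho> b"
    using x y ab unfolding states_def by auto
  have "op_mult \<rho> S (Rop Rm \<rho> a b lam) (Rop Rm \<rho> b a (- lam)) x y
      = two_site_op a b (unitarity_product Rm (\<rho> a) (\<rho> b) lam) x y"
    unfolding Rop_def two_site_op_flip_slots[of b a] unitarity_product_def
    by (rule two_site_op_mult[OF fin ab x y])
  also have "\<dots> = op_smult (unitarity_product Rm (\<rho> a) (\<rho> b) lam (0, 0) (0, 0)) op_id x y"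
    unfolding two_site_op_def op_smult_def op_id_def
    using unitarity_product_scalar[OF ybe init le, of lam] by (auto simp: fun_eq_iff)
  finally show "op_mult \<rho> S (Rop Rm \<rho> a b lam) (Rop Rm \<rho> b a (- lam)) x y
      = op_smult (unitarity_product Rm (\<rho> a) (\<rho> b) lam (0, 0) (0, 0)) op_id x y" .
qed

section \<open>The auxiliary slot and the partial trace\<close>

definition ext_aux :: "mop \<Rightarrow> mop" where
  "ext_aux A = (\<lambda>x y. A (x(0 := 0)) (y(0 := 0)) * (if x 0 = y 0 then 1 else 0))"

lemma ext_aux_acts_on:
  assumes A: "acts_on K A" and "0 \<notin> K"
  shows "ext_aux A = A"
proof (intro ext)
  fix x y :: "nat \<Rightarrow> nat"
  show "ext_aux A x y = A x y"
  proof (cases "\<forall>c. c \<notin> K \<longrightarrow> x c = y c")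
    case True
    then have "A (x(0 := 0)) (y(0 := 0)) = A x y"
      using assms by (intro acts_on_entry_cong[OF A]) auto
    then show ?thesis using True \<open>0 \<notin> K\<close> by (simp add: ext_aux_def)
  next
    case False
    then obtain c where "c \<notin> K" "x c \<noteq> y c" by auto
    then show ?thesis
      using acts_on_offdiag_zero[OF A, of c] acts_on_offdiag_zero[OF A, of c "x(0 := 0)" "y(0 := 0)"]
      by (cases "c = 0") (auto simp: ext_aux_def)
  qed
qed

lemma ext_aux_id [simp]: "ext_aux op_id = op_id"
  using ext_aux_acts_on[OF acts_on_op_id] by simp

context
  fixes \<rho> :: "nat \<Rightarrow> nat" and S :: "nat set" and r :: nat
  assumes fin: "finite S" and aux: "0 \<notin> S"
begin

lemma states_aux_zero: "x \<in> states \<rho> S \<Longrightarrow> x 0 = 0"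
  using aux unfolding states_def by auto

lemma states_insert_aux: "x \<in> states \<rho> S \<Longrightarrow> a \<le> r \<Longrightarrow> x(0 := a) \<in> states (\<rho>(0 := r)) (insert 0 S)"
  using aux unfolding states_def by auto

lemma states_insert_aux_D:
  assumes "z \<in> states (\<rho>(0 := r)) (insert 0 S)"
  shows "z(0 := 0) \<in> states \<rho> S" "z 0 \<le> r"
  using assms aux unfolding states_def by (auto split: if_splits)

lemma states_fun_upd_aux_zero [simp]: "x \<in> states \<rho> S \<Longrightarrow> x(0 := 0) = x"
  using states_aux_zero by (simp add: fun_upd_idem)

lemma sum_states_insert_aux:
  "sum f (states (\<rho>(0 := r)) (insert 0 S)) = (\<Sum>a\<le>r. \<Sum>x\<in>states \<rho> S. f (x(0 := a)))"
proof -
  have "(\<Sum>a\<le>r. \<Sum>x\<in>states \<rho> S. f (x(0 := a))) = (\<Sum>(a, x)\<in>{..r} \<times> states \<rho> S. f (x(0 := a)))"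
    by (rule sum.cartesian_product)
  also have "\<dots> = sum f (states (\<rho>(0 := r)) (insert 0 S))"
    by (rule sum.reindex_bij_witness[where i="\<lambda>z. (z 0, z(0 := 0))" and j="\<lambda>(a, x). x(0 := a)"])
       (auto simp: states_insert_aux states_insert_aux_D states_aux_zero)
  finally show ?thesis ..
qed

lemma op_mult_ext_aux:
  assumes x: "x \<in> states (\<rho>(0 := r)) (insert 0 S)"
  shows "op_mult (\<rho>(0 := r)) (insert 0 S) (ext_aux A) (ext_aux B) x y = ext_aux (op_mult \<rho> S A B) x y"
proof -
  have "op_mult (\<rho>(0 := r)) (insert 0 S) (ext_aux A) (ext_aux B) x y
      = (\<Sum>a\<le>r. if a = x 0 then (if x 0 = y 0 then op_mult \<rho> S A B (x(0 := 0)) (y(0 := 0)) else 0) else 0)"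
    unfolding op_mult_def sum_states_insert_aux
    by (intro sum.cong refl) (auto simp: ext_aux_def sum_distrib_left intro!: sum.cong)
  also have "\<dots> = ext_aux (op_mult \<rho> S A B) x y"
    using states_insert_aux_D(2)[OF x] by (simp add: ext_aux_def)
  finally show ?thesis .
qed

lemma op_prod_ext_aux:
  "op_eq (\<rho>(0 := r)) (insert 0 S) (op_prod (\<rho>(0 := r)) (insert 0 S) (map ext_aux As)) (ext_aux (op_prod \<rho> S As))"
proof (induction As)
  case (Cons A As)
  then have "op_eq (\<rho>(0 := r)) (insert 0 S) (op_prod (\<rho>(0 := r)) (insert 0 S) (map ext_aux (A # As)))
      (op_mult (\<rho>(0 := r)) (insert 0 S) (ext_aux A) (ext_aux (op_prod \<rho> S As)))"
    unfolding list.map op_prod_Cons by (rule op_mult_cong_right)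
  then show ?case
    by (rule op_eq_trans) (simp add: op_eq_def op_mult_ext_aux)
qed simp

lemma ptrace0_cong:
  "op_eq (\<rho>(0 := r)) (insert 0 S) Z Z' \<Longrightarrow> op_eq \<rho> S (ptrace0 r Z) (ptrace0 r Z')"
  unfolding op_eq_def ptrace0_def by (simp add: states_insert_aux)

lemma ptrace0_mult_ext_aux_left:
  assumes x: "x \<in> states \<rho> S"
  shows "ptrace0 r (op_mult (\<rho>(0 := r)) (insert 0 S) (ext_aux A) Z) x y = op_mult \<rho> S A (ptrace0 r Z) x y"
proof -
  have "ptrace0 r (op_mult (\<rho>(0 := r)) (insert 0 S) (ext_aux A) Z) x y
      = (\<Sum>a\<le>r. \<Sum>b\<le>r. if b = a then \<Sum>w\<in>states \<rho> S. A x w * Z (w(0 := a)) (y(0 := a)) else 0)"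
    unfolding ptrace0_def op_mult_def sum_states_insert_aux
  proof (intro sum.cong refl)
    fix a b
    show "(\<Sum>w\<in>states \<rho> S. ext_aux A (x(0 := a)) (w(0 := b)) * Z (w(0 := b)) (y(0 := a)))
      = (if b = a then \<Sum>w\<in>states \<rho> S. A x w * Z (w(0 := a)) (y(0 := a)) else 0)"
      using x by (auto simp: ext_aux_def intro!: sum.cong)
  qed
  also have "\<dots> = op_mult \<rho> S A (ptrace0 r Z) x y"
    unfolding op_mult_def ptrace0_def sum_distrib_left by (simp add: sum.swap[where A="{..r}"])
  finally show ?thesis .
qed

lemma ptrace0_mult_ext_aux_right:
  assumes y: "y \<in> states \<rho> S"
  shows "ptrace0 r (op_mult (\<rho>(0 := r)) (insert 0 S) Z (ext_aux B)) x y = op_mult \<rho> S (ptrace0 r Z) B x y"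
proof -
  have "ptrace0 r (op_mult (\<rho>(0 := r)) (insert 0 S) Z (ext_aux B)) x y
      = (\<Sum>a\<le>r. \<Sum>b\<le>r. if b = a then \<Sum>w\<in>states \<rho> S. Z (x(0 := a)) (w(0 := a)) * B w y else 0)"
    unfolding ptrace0_def op_mult_def sum_states_insert_aux
  proof (intro sum.cong refl)
    fix a b
    show "(\<Sum>w\<in>states \<rho> S. Z (x(0 := a)) (w(0 := b)) * ext_aux B (w(0 := b)) (y(0 := a)))
      = (if b = a then \<Sum>w\<in>states \<rho> S. Z (x(0 := a)) (w(0 := a)) * B w y else 0)"
      using y by (auto simp: ext_aux_def intro!: sum.cong)
  qed
  also have "\<dots> = op_mult \<rho> S (ptrace0 r Z) B x y"
    unfolding op_mult_def ptrace0_def sum_distrib_right by (simp add: sum.swap[where A="{..r}"])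
  finally show ?thesis .
qed

lemma ptrace0_flip:
  assumes flip: "is_flip (\<rho>(0 := r)) (insert 0 S) 0 i P" and i: "i \<in> S" "\<rho> i = r"
  shows "op_eq \<rho> S (ptrace0 r P) op_id"
  unfolding op_eq_def
proof (intro ballI)
  fix x y assume x: "x \<in> states \<rho> S" and y: "y \<in> states \<rho> S"
  have "i \<noteq> 0"
  proof
    assume "i = 0"
    with i(1) aux show False by simp
  qed
  have "y i \<le> r" using i y unfolding states_def by auto
  have "y(0 := a) = x(0 := a) \<circ> transpose 0 i \<longleftrightarrow> a = y i \<and> x = y" for a
  proof
    assume h: "y(0 := a) = x(0 := a) \<circ> transpose 0 i"
    have "y c = x c" for c
      using fun_cong[OF h, of c] fun_cong[OF h, of 0] \<open>i \<noteq> 0\<close> states_aux_zero[OF x] states_aux_zero[OF y]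
      by (cases "c = 0"; cases "c = i") auto
    then show "a = y i \<and> x = y"
      using fun_cong[OF h, of i] \<open>i \<noteq> 0\<close> by auto
  next
    assume "a = y i \<and> x = y"
    then show "y(0 := a) = x(0 := a) \<circ> transpose 0 i"
      using \<open>i \<noteq> 0\<close> states_aux_zero[OF y] by (auto simp: fun_eq_iff transpose_def)
  qed
  then have "ptrace0 r P x y = (\<Sum>a\<le>r. if a = y i then (if x = y then 1 else 0) else 0)"
    unfolding ptrace0_def using flip states_insert_aux[OF x] states_insert_aux[OF y]
    by (intro sum.cong refl) (auto simp: is_flip_def)
  also have "\<dots> = op_id x y" using \<open>y i \<le> r\<close> by (simp add: op_id_def)
  finally show "ptrace0 r P x y = op_id x y" .
qed

lemma ptrace0_ext_flip_ext:
  assumes "is_flip (\<rho>(0 := r)) (insert 0 S) 0 i P" and "i \<in> S" "\<rho> i = r"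
  shows "op_eq \<rho> S
    (ptrace0 r (op_mult (\<rho>(0 := r)) (insert 0 S) (ext_aux A) (op_mult (\<rho>(0 := r)) (insert 0 S) P (ext_aux B))))
    (op_mult \<rho> S A B)"
proof -
  have "op_eq \<rho> S
      (ptrace0 r (op_mult (\<rho>(0 := r)) (insert 0 S) (ext_aux A) (op_mult (\<rho>(0 := r)) (insert 0 S) P (ext_aux B))))
      (op_mult \<rho> S A (op_mult \<rho> S (ptrace0 r P) B))"
    by (simp add: op_eq_def ptrace0_mult_ext_aux_left ptrace0_mult_ext_aux_right op_mult_def[of \<rho> S A])
  also have "op_eq \<rho> S \<dots> (op_mult \<rho> S A (op_mult \<rho> S op_id B))"
    by (intro op_mult_cong_right op_mult_cong_left) (rule ptrace0_flip[OF assms])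
  also have "op_eq \<rho> S \<dots> (op_mult \<rho> S A B)"
    by (intro op_mult_cong_right op_mult_id_left fin)
  finally show ?thesis .
qed

end

section \<open>Transfer matrices at the inhomogeneities\<close>

definition site_R :: "rfam \<Rightarrow> (nat \<Rightarrow> nat) \<Rightarrow> (nat \<Rightarrow> complex) \<Rightarrow> nat \<Rightarrow> nat \<Rightarrow> mop" where
  "site_R Rm \<rho> \<xi> i j = Rop Rm \<rho> i j (\<xi> i - \<xi> j)"

definition left_string :: "rfam \<Rightarrow> (nat \<Rightarrow> nat) \<Rightarrow> (nat \<Rightarrow> complex) \<Rightarrow> nat \<Rightarrow> mop list" where
  "left_string Rm \<rho> \<xi> i = map (site_R Rm \<rho> \<xi> i) (rev [1..<i])"

definition right_string :: "rfam \<Rightarrow> (nat \<Rightarrow> nat) \<Rightarrow> (nat \<Rightarrow> complex) \<Rightarrow> nat \<Rightarrow> nat \<Rightarrow> nat \<Rightarrow> mop list" where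
  "right_string Rm \<rho> \<xi> N i m = map (site_R Rm \<rho> \<xi> i) (rev [Suc m..<Suc N])"

lemma acts_on_site_R: "acts_on {i, j} (site_R Rm \<rho> \<xi> i j)"
  unfolding site_R_def by (rule acts_on_Rop)

lemma op_prod_ext_aux_acts_on:
  assumes "finite S" "0 \<notin> S" and "\<And>A. A \<in> set As \<Longrightarrow> \<exists>K. acts_on K A \<and> 0 \<notin> K"
  shows "op_eq (\<rho>(0 := r)) (insert 0 S) (op_prod (\<rho>(0 := r)) (insert 0 S) As) (ext_aux (op_prod \<rho> S As))"
proof -
  have "map ext_aux As = As"
    using assms(3) by (induction As) (auto dest: ext_aux_acts_on)
  then show ?thesis
    using op_prod_ext_aux[OF assms(1,2), where As=As and \<rho>=\<rho> and r=r] by simp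
qed

lemma rev_upt_split:
  assumes "1 \<le> i" "i \<le> N"
  shows "rev [1..<Suc N] = rev [Suc i..<Suc N] @ i # rev [1..<i]"
proof -
  have "[1..<Suc N] = [1..<i] @ [i..<Suc N]"
    using assms upt_add_eq_append[of 1 i "Suc N - i"] by simp
  also have "[i..<Suc N] = i # [Suc i..<Suc N]"
    using assms by (simp add: upt_conv_Cons)
  finally show ?thesis by simp
qed

context
  fixes Rm :: rfam and \<rho> :: "nat \<Rightarrow> nat" and \<xi> :: "nat \<Rightarrow> complex" and N i :: nat
  assumes init: "initial_cond Rm" and i: "1 \<le> i" "i \<le> N"
begin

definition aux_R :: "nat \<Rightarrow> mop" where
  "aux_R j = Rop Rm (\<rho>(0 := \<rho> i)) 0 j (\<xi> i - \<xi> j)"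

lemma monodromy_at_site:
  "monodromy Rm \<rho> N \<xi> (\<rho> i) (\<xi> i)
    = op_prod (\<rho>(0 := \<rho> i)) (insert 0 {1..N}) (map aux_R (rev [Suc i..<Suc N]) @ aux_R i # map aux_R (rev [1..<i]))"
proof -
  have "{0..N} = insert 0 {1..N}" by auto
  then show ?thesis
    unfolding monodromy_def aux_R_def rev_upt_split[OF i] by simp
qed

lemma aux_R_at_site_is_flip: "is_flip (\<rho>(0 := \<rho> i)) (insert 0 {1..N}) 0 i (aux_R i)"
proof -
  have "aux_R i = two_site_op 0 i (Rm (\<rho> i) (\<rho> i) 0)"
    using i by (simp add: aux_R_def Rop_def)
  then show ?thesis
    using i by (simp add: initial_cond_is_flip[OF init])
qed

lemma swap_op_aux_R: "j \<noteq> 0 \<Longrightarrow> j \<noteq> i \<Longrightarrow> swap_op 0 i (aux_R j) = site_R Rm \<rho> \<xi> i j"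
  using i by (simp add: aux_R_def site_R_def Rop_def swap_op_two_site_op)

lemma aux_strings_commute_left_string:
  assumes A: "A \<in> set (local_op 0 E # map aux_R (rev [Suc i..<Suc N]))"
    and B: "B \<in> set (left_string Rm \<rho> \<xi> i)"
  shows "op_commute (\<rho>(0 := \<rho> i)) (insert 0 {1..N}) A B"
proof -
  have fin: "finite (insert 0 {1..N})" by simp
  obtain j where j: "1 \<le> j" "j < i" "B = site_R Rm \<rho> \<xi> i j"
    using B by (auto simp: left_string_def)
  consider "A = local_op 0 E" | k where "k \<in> set (rev [Suc i..<Suc N])" "A = aux_R k"
    using A by (auto simp del: set_upt set_rev)
  then show ?thesis
  proof cases
    case 1
    show ?thesis
      unfolding 1 j(3) using fin j
      by (intro op_commute_acts_on_disjoint[OF _ acts_on_local_op acts_on_site_R]) auto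
  next
    case 2
    show ?thesis
      unfolding 2 j(3) aux_R_def using fin j 2
      by (intro op_commute_acts_on_disjoint[OF _ acts_on_Rop acts_on_site_R]) auto
  qed
qed

lemma site_strings_avoid_aux:
  assumes "A \<in> set (left_string Rm \<rho> \<xi> i @ local_op i E # right_string Rm \<rho> \<xi> N i i)"
  shows "\<exists>K. acts_on K A \<and> 0 \<notin> K"
proof -
  have "\<exists>K. acts_on K (site_R Rm \<rho> \<xi> i j) \<and> 0 \<notin> K" if "1 \<le> j" for j
    using i that by (intro exI[of _ "{i, j}"]) (simp add: acts_on_site_R)
  moreover have "\<exists>K. acts_on K (local_op i E) \<and> 0 \<notin> K"
    using i by (intro exI[of _ "{i}"]) (simp add: acts_on_local_op)
  ultimately show ?thesis
    using assms by (auto simp: left_string_def right_string_def)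
qed

text \<open>Moving the flip aux_R i = P_{0i} through the monodromy matrix transports the strings on the
  auxiliary slot to site i, leaving P_{0i} between them.\<close>
lemma local_aux_mult_monodromy_at_site:
  defines "\<rho>' \<equiv> \<rho>(0 := \<rho> i)" and "S' \<equiv> insert 0 {1..N}"
  shows "op_eq \<rho>' S' (op_mult \<rho>' S' (local_op 0 E) (monodromy Rm \<rho> N \<xi> (\<rho> i) (\<xi> i)))
    (op_mult \<rho>' S' (ext_aux (op_prod \<rho> {1..N} (left_string Rm \<rho> \<xi> i)))
      (op_mult \<rho>' S' (aux_R i) (ext_aux (op_prod \<rho> {1..N} (local_op i E # right_string Rm \<rho> \<xi> N i i)))))"
proof -
  let ?pr = "op_prod \<rho>' S'"
  define Ls where "Ls = left_string Rm \<rho> \<xi> i"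
  define Rs where "Rs = local_op i E # right_string Rm \<rho> \<xi> N i i"
  define Rs0 where "Rs0 = local_op 0 E # map aux_R (rev [Suc i..<Suc N])"
  have fin: "finite S'" and slots: "0 \<in> S'" "i \<in> S'" "\<rho>' 0 = \<rho>' i"
    using i by (auto simp: S'_def \<rho>'_def)
  have flip: "is_flip \<rho>' S' 0 i (aux_R i)"
    unfolding \<rho>'_def S'_def by (rule aux_R_at_site_is_flip)
  have swap_Ls: "map (swap_op 0 i) (map aux_R (rev [1..<i])) = Ls"
    by (auto simp: Ls_def left_string_def swap_op_aux_R)
  have swap_Rs: "map (swap_op 0 i) Rs0 = Rs"
    by (auto simp: Rs_def Rs0_def right_string_def swap_op_aux_R swap_op_local_op)
  have commute: "op_commute \<rho>' S' A B" if "A \<in> set Rs0" "B \<in> set Ls" for A B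
    using aux_strings_commute_left_string that unfolding Rs0_def Ls_def \<rho>'_def S'_def .
  have "op_eq \<rho>' S' (op_mult \<rho>' S' (local_op 0 E) (monodromy Rm \<rho> N \<xi> (\<rho> i) (\<xi> i)))
      (?pr (Rs0 @ aux_R i # map aux_R (rev [1..<i])))"
    by (simp add: monodromy_at_site Rs0_def \<rho>'_def S'_def)
  also have "op_eq \<rho>' S' \<dots> (?pr (Rs0 @ Ls @ [aux_R i]))"
    using op_prod_append_cong_right[OF fin op_prod_flip_Cons[OF fin flip slots, of "map aux_R (rev [1..<i])"], of Rs0]
    unfolding swap_Ls by simp
  also have "op_eq \<rho>' S' \<dots> (?pr (Ls @ Rs0 @ [aux_R i]))"
    using op_prod_append_cong_left[OF fin op_prod_append_commute[OF fin commute]] by simp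
  also have "op_eq \<rho>' S' \<dots> (?pr (Ls @ aux_R i # Rs))"
    using op_prod_append_cong_right[OF fin op_prod_flip_snoc[OF fin flip slots, of Rs0], of Ls]
    unfolding swap_Rs by simp
  also have "op_eq \<rho>' S' \<dots> (op_mult \<rho>' S' (?pr Ls) (op_mult \<rho>' S' (aux_R i) (?pr Rs)))"
    using op_prod_append[OF fin, of \<rho>' Ls "aux_R i # Rs"] by simp
  also have "op_eq \<rho>' S' \<dots> (op_mult \<rho>' S' (ext_aux (op_prod \<rho> {1..N} Ls))
      (op_mult \<rho>' S' (aux_R i) (ext_aux (op_prod \<rho> {1..N} Rs))))"
    unfolding \<rho>'_def S'_def
    by (intro op_mult_cong op_mult_cong_right op_prod_ext_aux_acts_on)
       (auto simp: Ls_def Rs_def intro: site_strings_avoid_aux)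
  finally show ?thesis by (simp add: Ls_def Rs_def)
qed

lemma ptrace0_local_aux_monodromy_at_site:
  "op_eq \<rho> {1..N}
    (ptrace0 (\<rho> i) (op_mult (\<rho>(0 := \<rho> i)) {0..N} (local_op 0 E) (monodromy Rm \<rho> N \<xi> (\<rho> i) (\<xi> i))))
    (op_prod \<rho> {1..N} (left_string Rm \<rho> \<xi> i @ local_op i E # right_string Rm \<rho> \<xi> N i i))"
proof -
  let ?\<rho>' = "\<rho>(0 := \<rho> i)" and ?S' = "insert 0 {1..N}"
  have S': "{0..N} = ?S'" by auto
  have "op_eq \<rho> {1..N}
      (ptrace0 (\<rho> i) (op_mult ?\<rho>' {0..N} (local_op 0 E) (monodromy Rm \<rho> N \<xi> (\<rho> i) (\<xi> i))))
      (ptrace0 (\<rho> i) (op_mult ?\<rho>' ?S' (ext_aux (op_prod \<rho> {1..N} (left_string Rm \<rho> \<xi> i)))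
        (op_mult ?\<rho>' ?S' (aux_R i) (ext_aux (op_prod \<rho> {1..N} (local_op i E # right_string Rm \<rho> \<xi> N i i))))))"
    unfolding S' by (rule ptrace0_cong[OF _ _ local_aux_mult_monodromy_at_site]) auto
  also have "op_eq \<rho> {1..N} \<dots> (op_mult \<rho> {1..N} (op_prod \<rho> {1..N} (left_string Rm \<rho> \<xi> i))
      (op_prod \<rho> {1..N} (local_op i E # right_string Rm \<rho> \<xi> N i i)))"
    by (rule ptrace0_ext_flip_ext[OF _ _ aux_R_at_site_is_flip]) (use i in auto)
  also have "op_eq \<rho> {1..N} \<dots> (op_prod \<rho> {1..N} (left_string Rm \<rho> \<xi> i @ local_op i E # right_string Rm \<rho> \<xi> N i i))"
    by (rule op_eq_sym[OF op_prod_append]) simp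
  finally show ?thesis .
qed

end

definition site_transfer :: "rfam \<Rightarrow> (nat \<Rightarrow> nat) \<Rightarrow> nat \<Rightarrow> (nat \<Rightarrow> complex) \<Rightarrow> nat \<Rightarrow> mop" where
  "site_transfer Rm \<rho> N \<xi> i = transfer Rm \<rho> N \<xi> (\<rho> i) (\<xi> i)"

lemma local_op_delta: "local_op a (\<lambda>p q. if p = q then 1 else 0) = op_id"
  by (auto simp: local_op_def op_id_def fun_eq_iff)

lemma transfer_at_site:
  assumes init: "initial_cond Rm" and i: "1 \<le> i" "i \<le> N"
  shows "op_eq \<rho> {1..N} (site_transfer Rm \<rho> N \<xi> i)
    (op_prod \<rho> {1..N} (left_string Rm \<rho> \<xi> i @ right_string Rm \<rho> \<xi> N i i))"
proof -
  let ?T = "monodromy Rm \<rho> N \<xi> (\<rho> i) (\<xi> i)" and ?\<rho>' = "\<rho>(0 := \<rho> i)"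
  have S': "{0..N} = insert 0 {1..N}" by auto
  have "op_eq \<rho> {1..N} (site_transfer Rm \<rho> N \<xi> i) (ptrace0 (\<rho> i) (op_mult ?\<rho>' {0..N} op_id ?T))"
    unfolding site_transfer_def transfer_def S'
    by (rule ptrace0_cong) (auto intro: op_eq_sym op_mult_id_left)
  also have "op_eq \<rho> {1..N} \<dots>
      (op_prod \<rho> {1..N} (left_string Rm \<rho> \<xi> i @ op_id # right_string Rm \<rho> \<xi> N i i))"
    using ptrace0_local_aux_monodromy_at_site[OF init i, where E="\<lambda>p q. if p = q then 1 else 0"]
    unfolding local_op_delta .
  also have "op_eq \<rho> {1..N} \<dots> (op_prod \<rho> {1..N} (left_string Rm \<rho> \<xi> i @ right_string Rm \<rho> \<xi> N i i))"
    by (rule op_prod_drop_id) simp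
  finally show ?thesis .
qed

lemma transfers_upto_split:
  assumes init: "initial_cond Rm" and n: "1 \<le> n" "n \<le> N"
  shows "op_eq \<rho> {1..N} (op_prod \<rho> {1..N} (map (site_transfer Rm \<rho> N \<xi>) [1..<Suc n]))
    (op_mult \<rho> {1..N}
      (op_mult \<rho> {1..N} (op_prod \<rho> {1..N} (map (site_transfer Rm \<rho> N \<xi>) [1..<n]))
        (op_prod \<rho> {1..N} (left_string Rm \<rho> \<xi> n)))
      (op_prod \<rho> {1..N} (right_string Rm \<rho> \<xi> N n n)))"
proof -
  let ?m = "op_mult \<rho> {1..N}" and ?pr = "op_prod \<rho> {1..N}"
  let ?T = "?pr (map (site_transfer Rm \<rho> N \<xi>) [1..<n])"
  have fin: "finite {1..N}" by simp
  have "op_eq \<rho> {1..N} (?pr (map (site_transfer Rm \<rho> N \<xi>) [1..<Suc n])) (?m ?T (?pr [site_transfer Rm \<rho> N \<xi> n]))"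
    using op_prod_append[OF fin, of \<rho> "map (site_transfer Rm \<rho> N \<xi>) [1..<n]" "[site_transfer Rm \<rho> N \<xi> n]"] n
    by simp
  also have "op_eq \<rho> {1..N} \<dots> (?m ?T (?m (?pr (left_string Rm \<rho> \<xi> n)) (?pr (right_string Rm \<rho> \<xi> N n n))))"
    using op_prod_single[OF fin] transfer_at_site[OF init n] op_prod_append[OF fin]
    by (intro op_mult_cong_right) (meson op_eq_trans)
  finally show ?thesis
    by (simp only: op_mult_assoc[OF fin])
qed

definition tail_strings :: "rfam \<Rightarrow> (nat \<Rightarrow> nat) \<Rightarrow> (nat \<Rightarrow> complex) \<Rightarrow> nat \<Rightarrow> nat \<Rightarrow> mop list" where
  "tail_strings Rm \<rho> \<xi> N n = concat (map (\<lambda>i. right_string Rm \<rho> \<xi> N i n) [1..<n])"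

lemma tail_strings_cancel:
  assumes ybe: "YBE Rm" and init: "initial_cond Rm" and n: "1 \<le> n" "Suc n \<le> N"
  shows "\<exists>c. op_eq \<rho> {1..N}
    (op_prod \<rho> {1..N} (tail_strings Rm \<rho> \<xi> N n @ right_string Rm \<rho> \<xi> N n n @ left_string Rm \<rho> \<xi> (Suc n)))
    (op_smult c (op_prod \<rho> {1..N} (tail_strings Rm \<rho> \<xi> N (Suc n))))"
proof -
  define B where "B i = right_string Rm \<rho> \<xi> N i (Suc n)" for i
  define X where "X i = site_R Rm \<rho> \<xi> i (Suc n)" for i
  define Y where "Y k = site_R Rm \<rho> \<xi> (Suc n) k" for k
  have right_string_split: "right_string Rm \<rho> \<xi> N i n = B i @ [X i]" for i
  proof -
    have "[Suc n..<Suc N] = Suc n # [Suc (Suc n)..<Suc N]"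
      using n by (simp add: upt_conv_Cons)
    then show ?thesis by (simp add: right_string_def B_def X_def)
  qed
  have "tail_strings Rm \<rho> \<xi> N n @ right_string Rm \<rho> \<xi> N n n = concat (map (\<lambda>i. B i @ [X i]) [1..<Suc n])"
    using n by (simp add: tail_strings_def right_string_split)
  moreover have "left_string Rm \<rho> \<xi> (Suc n) = map Y (rev [1..<Suc n])"
    by (simp add: left_string_def Y_def[abs_def] del: upt_Suc)
  ultimately have "tail_strings Rm \<rho> \<xi> N n @ right_string Rm \<rho> \<xi> N n n @ left_string Rm \<rho> \<xi> (Suc n)
      = concat (map (\<lambda>i. B i @ [X i]) [1..<Suc n]) @ map Y (rev [1..<Suc n])"
    by simp
  moreover have "tail_strings Rm \<rho> \<xi> N (Suc n) = concat (map B [1..<Suc n])"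
    by (simp add: tail_strings_def B_def[abs_def] del: upt_Suc)
  moreover have "\<exists>c. op_eq \<rho> {1..N}
      (op_prod \<rho> {1..N} (concat (map (\<lambda>i. B i @ [X i]) [1..<Suc n]) @ map Y (rev [1..<Suc n])))
      (op_smult c (op_prod \<rho> {1..N} (concat (map B [1..<Suc n]))))"
  proof (rule op_prod_cancel_nested)
    fix i assume "1 \<le> i" "i \<le> n"
    then show "\<exists>c. op_eq \<rho> {1..N} (op_mult \<rho> {1..N} (X i) (Y i)) (op_smult c op_id)"
      using Rop_unitarity[OF ybe init, of "{1..N}" i "Suc n" \<rho> "\<xi> i - \<xi> (Suc n)"] n
      by (auto simp: X_def Y_def site_R_def)
  next
    fix k i A assume "1 \<le> k" "k < i" "i \<le> n" "A \<in> set (B i)"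
    then obtain j where j: "j \<in> set (rev [Suc (Suc n)..<Suc N])" "A = site_R Rm \<rho> \<xi> i j"
      by (auto simp: B_def right_string_def simp del: set_upt set_rev)
    show "op_commute \<rho> {1..N} (Y k) A"
      unfolding Y_def j(2) using j(1) \<open>k < i\<close> \<open>i \<le> n\<close>
      by (intro op_commute_acts_on_disjoint[OF _ acts_on_site_R acts_on_site_R]) auto
  qed simp
  ultimately show ?thesis by simp
qed

lemma transfers_mult_left_string:
  assumes ybe: "YBE Rm" and init: "initial_cond Rm"
  shows "1 \<le> n \<Longrightarrow> n \<le> N \<Longrightarrow> \<exists>c. op_eq \<rho> {1..N}
    (op_mult \<rho> {1..N} (op_prod \<rho> {1..N} (map (site_transfer Rm \<rho> N \<xi>) [1..<n]))
      (op_prod \<rho> {1..N} (left_string Rm \<rho> \<xi> n)))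
    (op_smult c (op_prod \<rho> {1..N} (tail_strings Rm \<rho> \<xi> N n)))"
proof (induction n rule: dec_induct)
  case base
  show ?case
    by (rule exI[of _ 1]) (simp add: left_string_def tail_strings_def op_mult_id_left)
next
  case (step n)
  let ?m = "op_mult \<rho> {1..N}" and ?pr = "op_prod \<rho> {1..N}"
  have fin: "finite {1..N}" by simp
  obtain c where c: "op_eq \<rho> {1..N}
      (?m (?pr (map (site_transfer Rm \<rho> N \<xi>) [1..<n])) (?pr (left_string Rm \<rho> \<xi> n)))
      (op_smult c (?pr (tail_strings Rm \<rho> \<xi> N n)))"
    using step by auto
  obtain c' where c': "op_eq \<rho> {1..N}
      (?pr (tail_strings Rm \<rho> \<xi> N n @ right_string Rm \<rho> \<xi> N n n @ left_string Rm \<rho> \<xi> (Suc n)))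
      (op_smult c' (?pr (tail_strings Rm \<rho> \<xi> N (Suc n))))"
    using tail_strings_cancel[OF ybe init] step by blast
  have "op_eq \<rho> {1..N} (?m (?pr (map (site_transfer Rm \<rho> N \<xi>) [1..<Suc n])) (?pr (left_string Rm \<rho> \<xi> (Suc n))))
      (?m (?m (?m (?pr (map (site_transfer Rm \<rho> N \<xi>) [1..<n])) (?pr (left_string Rm \<rho> \<xi> n)))
        (?pr (right_string Rm \<rho> \<xi> N n n))) (?pr (left_string Rm \<rho> \<xi> (Suc n))))"
    using step by (intro op_mult_cong_left transfers_upto_split[OF init]) auto
  also have "op_eq \<rho> {1..N} \<dots>
      (?m (?m (op_smult c (?pr (tail_strings Rm \<rho> \<xi> N n))) (?pr (right_string Rm \<rho> \<xi> N n n)))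
        (?pr (left_string Rm \<rho> \<xi> (Suc n))))"
    by (intro op_mult_cong_left c)
  also have "op_eq \<rho> {1..N} \<dots>
      (op_smult c (?pr (tail_strings Rm \<rho> \<xi> N n @ right_string Rm \<rho> \<xi> N n n @ left_string Rm \<rho> \<xi> (Suc n))))"
    using op_smult_cong[OF op_eq_sym[OF op_prod_append3[OF fin]], where c=c]
    by (simp only: op_mult_smult_left)
  also have "op_eq \<rho> {1..N} \<dots> (op_smult (c * c') (?pr (tail_strings Rm \<rho> \<xi> N (Suc n))))"
    using op_smult_cong[OF c', of c] by simp
  finally show ?case by blast
qed

lemma local_op_commute_transfers_mult_left_string:
  assumes ybe: "YBE Rm" and init: "initial_cond Rm" and n: "1 \<le> n" "n \<le> N"
  shows "op_commute \<rho> {1..N} (local_op n E)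
    (op_mult \<rho> {1..N} (op_prod \<rho> {1..N} (map (site_transfer Rm \<rho> N \<xi>) [1..<n]))
      (op_prod \<rho> {1..N} (left_string Rm \<rho> \<xi> n)))"
proof -
  obtain c where "op_eq \<rho> {1..N}
      (op_mult \<rho> {1..N} (op_prod \<rho> {1..N} (map (site_transfer Rm \<rho> N \<xi>) [1..<n]))
        (op_prod \<rho> {1..N} (left_string Rm \<rho> \<xi> n)))
      (op_smult c (op_prod \<rho> {1..N} (tail_strings Rm \<rho> \<xi> N n)))"
    using transfers_mult_left_string[OF ybe init n] by blast
  moreover have "op_commute \<rho> {1..N} (local_op n E) (op_prod \<rho> {1..N} (tail_strings Rm \<rho> \<xi> N n))"
    by (rule op_commute_prod)
       (auto simp: tail_strings_def right_string_def
             intro!: op_commute_acts_on_disjoint[OF _ acts_on_local_op acts_on_site_R])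
  ultimately show ?thesis
    by (meson op_commute_cong op_commute_smult op_eq_sym)
qed

theorem proposition3p1:
  fixes Rm :: rfam and \<rho> :: "nat \<Rightarrow> nat" and \<xi> :: "nat \<Rightarrow> complex"
    and N n :: nat and E :: "nat \<Rightarrow> nat \<Rightarrow> complex" and B :: mop
  assumes ybe: "YBE Rm"
    and init: "initial_cond Rm"
    and n_range: "1 \<le> n" "n \<le> N"
    and inv: "\<forall>i\<in>{1..n}. invertible_op \<rho> {1..N} (transfer Rm \<rho> N \<xi> (\<rho> i) (\<xi> i))"
    and B_inv:
      "op_eq \<rho> {1..N}
         (op_mult \<rho> {1..N} (op_prod \<rho> {1..N} (map (\<lambda>i. transfer Rm \<rho> N \<xi> (\<rho> i) (\<xi> i)) [1..<Suc n])) B)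
         op_id"
      "op_eq \<rho> {1..N}
         (op_mult \<rho> {1..N} B (op_prod \<rho> {1..N} (map (\<lambda>i. transfer Rm \<rho> N \<xi> (\<rho> i) (\<xi> i)) [1..<Suc n])))
         op_id"
  shows "op_eq \<rho> {1..N} (local_op n E)
           (op_mult \<rho> {1..N}
              (op_mult \<rho> {1..N}
                 (op_prod \<rho> {1..N} (map (\<lambda>i. transfer Rm \<rho> N \<xi> (\<rho> i) (\<xi> i)) [1..<n]))
                 (ptrace0 (\<rho> n)
                    (op_mult (\<rho>(0 := \<rho> n)) {0..N} (local_op 0 E) (monodromy Rm \<rho> N \<xi> (\<rho> n) (\<xi> n)))))
              B)"
proof -
  let ?S = "{1..N}"
  let ?m = "op_mult \<rho> ?S" and ?pr = "op_prod \<rho> ?S"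
  let ?T = "?pr (map (site_transfer Rm \<rho> N \<xi>) [1..<n])"
    and ?L = "?pr (left_string Rm \<rho> \<xi> n)" and ?R = "?pr (right_string Rm \<rho> \<xi> N n n)"
  have fin: "finite ?S" by simp
  have transfers: "(\<lambda>i. transfer Rm \<rho> N \<xi> (\<rho> i) (\<xi> i)) = site_transfer Rm \<rho> N \<xi>"
    by (simp add: fun_eq_iff site_transfer_def)
  have commute: "op_commute \<rho> ?S (local_op n E) (?m ?T ?L)"
    by (rule local_op_commute_transfers_mult_left_string[OF ybe init n_range])
  have E_conj: "op_eq \<rho> ?S (local_op n E) (?m (?m (?m ?T ?L) (?m (local_op n E) ?R)) B)"
    using B_inv(1) transfers_upto_split[OF init n_range] commute unfolding transfers
    by (rule op_commute_through_right_inverse[OF fin])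
  have "op_eq \<rho> ?S
      (ptrace0 (\<rho> n) (op_mult (\<rho>(0 := \<rho> n)) {0..N} (local_op 0 E) (monodromy Rm \<rho> N \<xi> (\<rho> n) (\<xi> n))))
      (?m ?L (?m (local_op n E) ?R))"
    using op_eq_trans[OF ptrace0_local_aux_monodromy_at_site[OF init n_range] op_prod_append[OF fin]]
    by (simp only: op_prod_Cons)
  then have trace: "op_eq \<rho> ?S (?m ?T (ptrace0 (\<rho> n)
      (op_mult (\<rho>(0 := \<rho> n)) {0..N} (local_op 0 E) (monodromy Rm \<rho> N \<xi> (\<rho> n) (\<xi> n)))))
    (?m (?m ?T ?L) (?m (local_op n E) ?R))"
    using op_mult_cong_right by (simp only: op_mult_assoc[OF fin])
  show ?thesis
    unfolding transfers using op_eq_trans[OF E_conj op_mult_cong_left[OF op_eq_sym[OF trace]]] .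
qed

end
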